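(* Let $U\subset\mathbb{R}^4$ be a contractible, oriented, relatively compact nonempty open set with coordinates $x^a$, $V\subset\mathbb{R}^{n_s}$ an oriented open set, $\mathcal{J}$ a taming map on $V$ and $(\mathcal{R},\mathcal{I})=\gamma^{-1}(\mathcal{J})$. Let $g$ be a Lorentzian metric on $U$, $\phi\colon U\to V$ smooth, and $\mathcal{V}\in\Omega^2(U,\mathbb{R}^{2n_v})$ with $\ast_g\mathcal{V}=-\mathcal{J}(\phi)\mathcal{V}$; write $\mathcal{V}=(F,G)^t$ with $F=(F^\Lambda)\in\Omega^2(U,\mathbb{R}^{n_v})$. Then for all indices $a,b$, $$2\,\mathcal{I}_{\Lambda\Sigma}(\phi)F^\Lambda_{ac}F^{\Sigma\,c}_{b}-\tfrac12 g_{ab}\,\mathcal{I}_{\Lambda\Sigma}(\phi)F^\Lambda_{cd}F^{\Sigma\,cd}=\omega\big(\mathcal{V}_{ac},\mathcal{J}(\phi)\mathcal{V}_b{}^{c}\big),$$ i.e. the gauge energy momentum tensor $\mathcal{T}(\mathcal{J})(g,\phi,\mathcal{V})$ equals $\omega(\mathcal{V}_{ac},\mathcal{J}\mathcal{V}_b{}^c)\,\mathrm{d}x^a\odot\mathrm{d}x^b$.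
   Context: Indices are raised with $g$ and repeated indices summed. The standard symplectic form $\omega$ on $\mathbb{R}^{2n_v}$ has matrix $\begin{pmatrix}0&-\mathrm{Id}\\ \mathrm{Id}&0\end{pmatrix}$ in the canonical basis. A local electromagnetic structure on $V$ is a pair $(\mathcal{R},\mathcal{I})$ of smooth maps $V\to\mathrm{Sym}(n_v,\mathbb{R})$ with $\mathcal{I}$ pointwise positive definite. A taming map is a smooth $\mathcal{J}\colon V\to\mathrm{Aut}(\mathbb{R}^{2n_v})$ whose values are complex structures $J$ with $\omega(J\cdot,J\cdot)=\omega$ and $\omega(\xi,J\xi)>0$ for $\xi\ne0$. The bijection $\gamma$ from local electromagnetic structures to taming maps sends $(\mathcal{R},\mathcal{I})$ to $\begin{pmatrix}-\mathcal{I}^{-1}\mathcal{R} & \mathcal{I}^{-1}\\ -\mathcal{I}-\mathcal{R}\mathcal{I}^{-1}\mathcal{R} & \mathcal{R}\mathcal{I}^{-1}\end{pmatrix}$. We write $\mathcal{J}(\phi)=\mathcal{J}\circ\phi$, $\mathcal{I}(\phi)=\mathcal{I}\circ\phi$, and $\ast_g$ is the Hodge star of $g$ and the orientation of $U$. *)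

theory Defs
  imports "HOL-Analysis.Analysis"
begin

fun Ck_on :: "nat \<Rightarrow> 'a::real_normed_vector set \<Rightarrow> ('a \<Rightarrow> 'b::real_normed_vector) \<Rightarrow> bool" where
  "Ck_on 0 S f = continuous_on S f"
| "Ck_on (Suc k) S f =
     (\<exists>f'. (\<forall>x\<in>S. (f has_derivative f' x) (at x)) \<and> (\<forall>v. Ck_on k S (\<lambda>x. f' x v)))"

definition smooth_on :: "'a::real_normed_vector set \<Rightarrow> ('a \<Rightarrow> 'b::real_normed_vector) \<Rightarrow> bool" where
  "smooth_on S f \<longleftrightarrow> (\<forall>k. Ck_on k S f)"

section \<open>Symplectic form on R^(2 n_v), indices Inl = first block, Inr = second block\<close>

definition omega_mat :: "real^('n::finite + 'n)^('n + 'n)" where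
  "omega_mat = (\<chi> i j. case (i, j) of
      (Inl p, Inr q) \<Rightarrow> (if p = q then -1 else 0)
    | (Inr p, Inl q) \<Rightarrow> (if p = q then 1 else 0)
    | _ \<Rightarrow> 0)"

definition omega :: "real^('n::finite + 'n) \<Rightarrow> real^('n + 'n) \<Rightarrow> real" where
  "omega \<xi> \<eta> = \<xi> \<bullet> (omega_mat *v \<eta>)"

definition sym_mat :: "real^'n^'n \<Rightarrow> bool" where
  "sym_mat A \<longleftrightarrow> transpose A = A"

definition pos_def_mat :: "real^'n^'n \<Rightarrow> bool" where
  "pos_def_mat A \<longleftrightarrow> (\<forall>v. v \<noteq> 0 \<longrightarrow> v \<bullet> (A *v v) > 0)"

definition local_em_structure ::
  "('s::finite) itself \<Rightarrow> (real^'s) set \<Rightarrow> (real^'s \<Rightarrow> real^'n::finite^'n) \<Rightarrow> (real^'s \<Rightarrow> real^'n^'n) \<Rightarrow> bool" where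
  "local_em_structure _ V R I \<longleftrightarrow>
     (\<forall>p q. smooth_on V (\<lambda>y. R y $ p $ q) \<and> smooth_on V (\<lambda>y. I y $ p $ q)) \<and>
     (\<forall>y\<in>V. sym_mat (R y) \<and> sym_mat (I y) \<and> pos_def_mat (I y))"

definition taming_map ::
  "(real^'s::finite) set \<Rightarrow> (real^'s \<Rightarrow> real^('n::finite + 'n)^('n + 'n)) \<Rightarrow> bool" where
  "taming_map V J \<longleftrightarrow>
     (\<forall>i j. smooth_on V (\<lambda>y. J y $ i $ j)) \<and>
     (\<forall>y\<in>V. J y ** J y = - mat 1 \<and>
        (\<forall>\<xi> \<eta>. omega (J y *v \<xi>) (J y *v \<eta>) = omega \<xi> \<eta>) \<and>
        (\<forall>\<xi>. \<xi> \<noteq> 0 \<longrightarrow> omega \<xi> (J y *v \<xi>) > 0))"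

definition gamma_mat :: "real^'n::finite^'n \<Rightarrow> real^'n^'n \<Rightarrow> real^('n + 'n)^('n + 'n)" where
  "gamma_mat R I = (let Ii = matrix_inv I in (\<chi> i j. case (i, j) of
      (Inl p, Inl q) \<Rightarrow> (- (Ii ** R)) $ p $ q
    | (Inl p, Inr q) \<Rightarrow> Ii $ p $ q
    | (Inr p, Inl q) \<Rightarrow> (- I - R ** Ii ** R) $ p $ q
    | (Inr p, Inr q) \<Rightarrow> (R ** Ii) $ p $ q))"

definition minkowski :: "real^4^4" where
  "minkowski = (\<chi> i j. if i = j then (if i = 0 then -1 else 1) else 0)"

definition lorentzian_metric :: "(real^4) set \<Rightarrow> (real^4 \<Rightarrow> real^4^4) \<Rightarrow> bool" where
  "lorentzian_metric U g \<longleftrightarrow>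
     (\<forall>a b. smooth_on U (\<lambda>x. g x $ a $ b)) \<and>
     (\<forall>x\<in>U. sym_mat (g x) \<and>
        (\<exists>P::real^4^4. invertible P \<and> transpose P ** g x ** P = minkowski))"

definition ord_sign :: "4 \<Rightarrow> 4 \<Rightarrow> real" where
  "ord_sign x y = (if x < y then 1 else if x = y then 0 else -1)"

text \<open>Levi-Civita symbol with epsilon_0123 = 1\<close>
definition levi :: "4 \<Rightarrow> 4 \<Rightarrow> 4 \<Rightarrow> 4 \<Rightarrow> real" where
  "levi a b c d = ord_sign a b * ord_sign a c * ord_sign a d * ord_sign b c * ord_sign b d * ord_sign c d"

text \<open>Hodge star of a (vector valued) 2-form given by antisymmetric components W a b,
  w.r.t. metric G and orientation sign \<sigma> (1: standard orientation dx0 dx1 dx2 dx3):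
  (*W)_ab = \<sigma>/2 sqrt|det G| eps_abcd G^ce G^df W_ef\<close>
definition hodge2 :: "real \<Rightarrow> real^4^4 \<Rightarrow> (4 \<Rightarrow> 4 \<Rightarrow> 'v::real_vector) \<Rightarrow> 4 \<Rightarrow> 4 \<Rightarrow> 'v" where
  "hodge2 \<sigma> G W a b = (\<sigma> * sqrt \<bar>det G\<bar> / 2) *\<^sub>R
     (\<Sum>c\<in>UNIV. \<Sum>d\<in>UNIV. \<Sum>e\<in>UNIV. \<Sum>f\<in>UNIV.
        (levi a b c d * matrix_inv G $ c $ e * matrix_inv G $ d $ f) *\<^sub>R W e f)"

definition two_form_on :: "(real^4) set \<Rightarrow> (real^4 \<Rightarrow> 4 \<Rightarrow> 4 \<Rightarrow> 'v::real_normed_vector) \<Rightarrow> bool" where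
  "two_form_on U W \<longleftrightarrow> (\<forall>a b. smooth_on U (\<lambda>x. W x a b)) \<and> (\<forall>x\<in>U. \<forall>a b. W x a b = - W x b a)"

end

theory Submission
  imports Defs
begin

(* Pointwise the identity is linear algebra. For the taming matrix Y = gamma(R, I) one has
   omega(u, Y v) = <u1, I v1> + <(Y u)1, I (Y v)1>, where u1 denotes the first n_v components,
   and the duality condition star V = -Y V says (Y V)1 = -star F. So the right-hand side is
   I_LS (F^L_ac F^S_b^c + (star F^L)_ac (star F^S)_b^c). In Lorentzian signature
   (star F)_ac (star H)_b^c = H_ac F_b^c - 1/2 g_ab F_cd H^cd, and by the symmetry of I the two
   terms add up to the left-hand side. This last identity is checked entrywise in Minkowski
   coordinates and transported by a frame P with P^T g P = eta: the Levi-Civita symbol picks up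
   the factor det P, and sigma sqrt|det g| det P = +-1. *)

lemma sum_swap_inner_pair:
  "(\<Sum>x\<in>X. \<Sum>m\<in>E. \<Sum>n\<in>F. g x m n) = (\<Sum>m\<in>E. \<Sum>n\<in>F. \<Sum>x\<in>X. g x m n)"
  by (subst sum.swap) (rule sum.cong[OF refl], rule sum.swap)

(* Instantiating E and F keeps the permutative rule from rewriting its own result. *)
lemma sum_swap_pair_outward:
  "(\<Sum>i\<in>A. \<Sum>j\<in>B. \<Sum>k\<in>C. \<Sum>l\<in>D. \<Sum>m\<in>E. \<Sum>n\<in>F. f i j k l m n)
   = (\<Sum>m\<in>E. \<Sum>n\<in>F. \<Sum>i\<in>A. \<Sum>j\<in>B. \<Sum>k\<in>C. \<Sum>l\<in>D. f i j k l m n)"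
  by (simp only: sum_swap_inner_pair[where E = E and F = F])

lemma sum_swap_pairs:
  "(\<Sum>x\<in>A. \<Sum>y\<in>B. \<Sum>u\<in>C. \<Sum>v\<in>D. f x y u v) = (\<Sum>u\<in>C. \<Sum>v\<in>D. \<Sum>x\<in>A. \<Sum>y\<in>B. f x y u v)"
  by (simp only: sum_swap_inner_pair[where E = C and F = D])

lemma matrix_mult_component: "(A ** B) $ i $ j = (\<Sum>k\<in>UNIV. A$i$k * B$k$j)"
  by (simp add: matrix_matrix_mult_def)

lemma congruence_component:
  "(transpose P ** X ** P) $ a $ b = (\<Sum>i\<in>UNIV. \<Sum>j\<in>UNIV. P$i$a * X$i$j * P$j$b)"
  unfolding matrix_mult_component by (simp add: transpose_def sum_distrib_right) (rule sum.swap)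

lemma congruence_transpose_component:
  "(P ** X ** transpose P) $ a $ b = (\<Sum>i\<in>UNIV. \<Sum>j\<in>UNIV. P$a$i * X$i$j * P$b$j)"
  using congruence_component[of "transpose P" X a b] by (simp add: transpose_def)

lemma product_transpose_component:
  "(F ** Gi ** transpose H) $ a $ b = (\<Sum>c\<in>UNIV. F$a$c * (\<Sum>d\<in>UNIV. Gi$c$d * (H::real^'n^'m)$b$d))"
  unfolding matrix_mult_component
  by (simp add: transpose_def sum_distrib_left sum_distrib_right ac_simps) (rule sum.swap)

lemma matrix_neg_lmult: "(- A) ** (B::'a::ring_1^'k^'n) = - (A ** B)"
  by (simp add: matrix_matrix_mult_def vec_eq_iff sum_negf)

lemma matrix_neg_rmult: "(A::'a::ring_1^'n^'m) ** (- B) = - (A ** B)"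
  by (simp add: matrix_matrix_mult_def vec_eq_iff sum_negf)

lemma matrix_diff_rdistrib: "(A - B) ** (C::'a::ring_1^'k^'n) = A ** C - B ** C"
  by (simp add: matrix_matrix_mult_def vec_eq_iff sum_subtractf algebra_simps)

lemma matrix_diff_ldistrib: "(C::'a::ring_1^'n^'m) ** (A - B) = C ** A - C ** B"
  by (simp add: matrix_matrix_mult_def vec_eq_iff sum_subtractf algebra_simps)

lemma matrix_vector_mult_neg_left: "(- A) *v x = - ((A::real^'n^'m) *v x)"
  by (simp add: matrix_vector_mult_def vec_eq_iff sum_negf)

lemma matrix_mul_cancel_right: "A ** B = mat 1 \<Longrightarrow> X ** A ** B = X"
  by (metis matrix_mul_assoc matrix_mul_rid)

lemma invertible_matrix_inv:
  "invertible (A::'a::semiring_1^'n^'n) \<Longrightarrow> A ** matrix_inv A = mat 1 \<and> matrix_inv A ** A = mat 1"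
  unfolding invertible_def matrix_inv_def by (rule someI_ex)

lemma matrix_inv_eqI:
  assumes "(A::'a::semiring_1^'n^'n) ** B = mat 1" "B ** A = mat 1"
  shows "matrix_inv A = B"
proof -
  have inv: "matrix_inv A ** A = mat 1"
    using invertible_matrix_inv[of A] assms unfolding invertible_def by blast
  have "matrix_inv A = matrix_inv A ** (A ** B)"
    using assms(1) by simp
  also have "\<dots> = B"
    by (simp add: matrix_mul_assoc inv)
  finally show ?thesis .
qed

lemma congruence_cancel:
  fixes P X Y :: "real^'n^'n"
  assumes "invertible P" "transpose P ** X ** P = transpose P ** Y ** P"
  shows "X = Y"
proof -
  have P: "P ** matrix_inv P = mat 1"
    using invertible_matrix_inv[OF assms(1)] by blast
  have Pt: "matrix_inv (transpose P) ** transpose P = mat 1"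
    using invertible_matrix_inv[OF transpose_invertible[OF assms(1)]] by blast
  have "Z = matrix_inv (transpose P) ** (transpose P ** Z ** P) ** matrix_inv P" for Z
    by (simp add: matrix_mul_assoc Pt) (simp add: matrix_mul_assoc[symmetric] P)
  then show ?thesis
    using assms(2) by metis
qed

lemma antisymmetric_component:
  assumes "transpose F = - F"
  shows "F$j$i = - F$i$j"
proof -
  have "transpose F $ i $ j = (- F) $ i $ j"
    using assms by simp
  then show ?thesis
    by (simp add: transpose_def)
qed

lemma antisymmetric_congruence:
  fixes F P :: "real^'n^'n"
  assumes "transpose F = - F"
  shows "transpose (transpose P ** F ** P) = - (transpose P ** F ** P)"
  using assms by (simp add: matrix_transpose_mul matrix_neg_lmult matrix_neg_rmult matrix_mul_assoc)

lemma symmetric_matrix_inner: "transpose A = A \<Longrightarrow> (A *v u) \<bullet> v = u \<bullet> ((A::real^'n^'n) *v v)"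
  by (metis dot_lmul_matrix transpose_matrix_vector)

lemma pos_def_invertible: "pos_def_mat (A::real^'n^'n) \<Longrightarrow> invertible A"
  unfolding invertible_left_inverse matrix_left_invertible_ker pos_def_mat_def
  by (metis inner_zero_right less_irrefl)

section \<open>The Levi-Civita symbol\<close>

lemma less_4: "(0::4) < 1" "(1::4) < 2" "(2::4) < 3" "(0::4) < 2" "(0::4) < 3" "(1::4) < 3"
  by (simp_all add: less_bit0_def bit0.Rep_numeral bit0.Rep_0 bit0.Rep_1)

lemma not_less_4: "\<not> (1::4) < 0" "\<not> (2::4) < 1" "\<not> (3::4) < 2" "\<not> (2::4) < 0" "\<not> (3::4) < 0" "\<not> (3::4) < 1"
  using less_4 by (simp_all add: not_less order_less_imp_le)

lemma exhaust_4_from_0: "(i::4) = 0 \<or> i = 1 \<or> i = 2 \<or> i = 3"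
  using exhaust_4[of i] by auto

lemma UNIV_4_from_0: "(UNIV::4 set) = {0, 1, 2, 3}"
  using exhaust_4_from_0 by auto

lemma all_4_from_0: "(\<forall>i::4. P i) \<longleftrightarrow> P 0 \<and> P 1 \<and> P 2 \<and> P 3"
  by (metis exhaust_4_from_0)

lemma sum_UNIV_4: "sum f (UNIV::4 set) = f 0 + f 1 + f 2 + f 3"
  unfolding UNIV_4_from_0 by (simp add: ac_simps)

lemma prod_UNIV_4: "prod f (UNIV::4 set) = f 0 * f 1 * f 2 * f 3"
  unfolding UNIV_4_from_0 by (simp add: ac_simps)

lemma ord_sign_simps:
  "ord_sign i i = 0"
  "ord_sign 0 1 = 1" "ord_sign 0 2 = 1" "ord_sign 0 3 = 1" "ord_sign 1 2 = 1" "ord_sign 1 3 = 1" "ord_sign 2 3 = 1"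
  "ord_sign 1 0 = -1" "ord_sign 2 0 = -1" "ord_sign 3 0 = -1" "ord_sign 2 1 = -1" "ord_sign 3 1 = -1" "ord_sign 3 2 = -1"
  using less_4 by (simp_all add: ord_sign_def not_less_iff_gr_or_eq)

lemma alternating_4_eq_levi:
  fixes f :: "4 \<Rightarrow> 4 \<Rightarrow> 4 \<Rightarrow> 4 \<Rightarrow> real"
  assumes swap_12: "\<And>i j k l. f j i k l = - f i j k l"
    and swap_23: "\<And>i j k l. f i k j l = - f i j k l"
    and swap_34: "\<And>i j k l. f i j l k = - f i j k l"
  shows "f i j k l = levi i j k l * f 0 1 2 3"
proof -
  have zero: "f i i k l = 0" "f i j j l = 0" "f i j k k = 0" for i j k l
    using swap_12[of i i k l] swap_23[of i j j l] swap_34[of i j k k] by simp_all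
  have sort: "j < i \<Longrightarrow> f i j k l = - f j i k l" "k < j \<Longrightarrow> f i j k l = - f i k j l"
    "l < k \<Longrightarrow> f i j k l = - f i j l k" for i j k l
    using swap_12[of j i k l] swap_23[of i k j l] swap_34[of i j l k] by simp_all
  show ?thesis
    using exhaust_4_from_0[of i] exhaust_4_from_0[of j] exhaust_4_from_0[of k] exhaust_4_from_0[of l]
    apply (elim disjE)
    apply (simp_all only: zero)
    apply (simp_all add: less_4 not_less_4 sort zero levi_def ord_sign_simps)
    done
qed

definition tuple4 :: "4 \<Rightarrow> 4 \<Rightarrow> 4 \<Rightarrow> 4 \<Rightarrow> 4 \<Rightarrow> 4" where
  "tuple4 i j k l r = (if r = 0 then i else if r = 1 then j else if r = 2 then k else l)"

lemma tuple4_eta: "tuple4 (f 0) (f 1) (f 2) (f 3) = f"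
  by (rule ext) (metis tuple4_def exhaust_4_from_0)

lemma sum_funs_4:
  "(\<Sum>f\<in>(UNIV::(4\<Rightarrow>4) set). h (f 0) (f 1) (f 2) (f 3)) =
   (\<Sum>i\<in>UNIV. \<Sum>j\<in>UNIV. \<Sum>k\<in>UNIV. \<Sum>l\<in>UNIV. (h i j k l :: real))"
proof -
  have "(\<Sum>f\<in>(UNIV::(4\<Rightarrow>4) set). h (f 0) (f 1) (f 2) (f 3)) =
        (\<Sum>(i,j,k,l)\<in>UNIV\<times>UNIV\<times>UNIV\<times>UNIV. h i j k l)"
    by (rule sum.reindex_bij_witness[where i="\<lambda>(i,j,k,l). tuple4 i j k l" and j="\<lambda>f. (f 0, f 1, f 2, f 3)"])
       (auto simp: tuple4_eta tuple4_def)
  then show ?thesis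
    by (simp add: sum.cartesian_product split_def)
qed

lemma axis_rows_matrix_mult:
  "(\<chi> r. axis (f r) (1::'a::semiring_1)) ** (A::'a^'n^'m) = (\<chi> r. A $ f r)"
  by (simp add: vec_eq_iff matrix_matrix_mult_def axis_def if_distrib[of "\<lambda>x. x * _"] cong: if_cong)

lemma levi_eq_det: "levi i j k l = det (\<chi> r. axis (tuple4 i j k l r) 1 :: real^4^4)"
proof -
  let ?E = "\<lambda>i j k l. (\<chi> r. axis (tuple4 i j k l r) 1) :: real^4^4"
  have det_swap: "det B = - det A" if "B = (\<chi> r. A $ Transposition.transpose p q r)" "p \<noteq> q"
    for A B :: "real^4^4" and p q
    using det_permute_rows[of "Transposition.transpose p q" A] that
    by (simp add: permutes_swap_id sign_swap_id)
  have "det (?E i j k l) = levi i j k l * det (?E 0 1 2 3)"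
  proof (rule alternating_4_eq_levi)
    show "det (?E j i k l) = - det (?E i j k l)" for i j k l
      by (rule det_swap[where p = 0 and q = 1]) (simp_all add: vec_eq_iff all_4_from_0 tuple4_def)
    show "det (?E i k j l) = - det (?E i j k l)" for i j k l
      by (rule det_swap[where p = 1 and q = 2]) (simp_all add: vec_eq_iff all_4_from_0 tuple4_def)
    show "det (?E i j l k) = - det (?E i j k l)" for i j k l
      by (rule det_swap[where p = 2 and q = 3]) (simp_all add: vec_eq_iff all_4_from_0 tuple4_def)
  qed
  moreover have "?E 0 1 2 3 = mat 1"
    by (simp add: vec_eq_iff all_4_from_0 tuple4_def mat_def axis_def)
  ultimately show ?thesis
    by simp
qed

lemma det_levi_expansion: "det (N::real^4^4) =
  (\<Sum>i\<in>UNIV. \<Sum>j\<in>UNIV. \<Sum>k\<in>UNIV. \<Sum>l\<in>UNIV. levi i j k l * N$0$i * N$1$j * N$2$k * N$3$l)"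
proof -
  have "N = (\<chi> r. \<Sum>i\<in>UNIV. N$r$i *s axis i (1::real))"
    by (simp add: basis_expansion vec_eq_iff[of N])
  then have "det N = (\<Sum>f\<in>(UNIV::(4\<Rightarrow>4) set). det (\<chi> r. N$r$(f r) *s axis (f r) (1::real) :: real^4^4))"
    using det_linear_rows_sum[of "UNIV::4 set" "\<lambda>r i. N$r$i *s axis i (1::real)"] by simp
  also have "\<dots> = (\<Sum>f\<in>(UNIV::(4\<Rightarrow>4) set).
      N$0$(f 0) * N$1$(f 1) * N$2$(f 2) * N$3$(f 3) * levi (f 0) (f 1) (f 2) (f 3))"
    by (simp add: det_rows_mul prod_UNIV_4 levi_eq_det tuple4_eta)
  also have "\<dots> = (\<Sum>i\<in>UNIV. \<Sum>j\<in>UNIV. \<Sum>k\<in>UNIV. \<Sum>l\<in>UNIV. levi i j k l * N$0$i * N$1$j * N$2$k * N$3$l)"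
    by (subst sum_funs_4[where h="\<lambda>i j k l. N$0$i * N$1$j * N$2$k * N$3$l * levi i j k l"]) (simp add: ac_simps)
  finally show ?thesis .
qed

lemma levi_congruence:
  "(\<Sum>i\<in>UNIV. \<Sum>j\<in>UNIV. \<Sum>k\<in>UNIV. \<Sum>l\<in>UNIV. levi i j k l * M$i$a * M$j$b * M$k$c * M$l$d)
   = det (M::real^4^4) * levi a b c d"
proof -
  let ?N = "(\<chi> r. transpose M $ tuple4 a b c d r) :: real^4^4"
  have "?N = (\<chi> r. axis (tuple4 a b c d r) 1) ** transpose M"
    by (rule axis_rows_matrix_mult[symmetric])
  then have "det ?N = levi a b c d * det M"
    by (simp only: det_mul levi_eq_det det_transpose)
  moreover have "det ?N = (\<Sum>i\<in>UNIV. \<Sum>j\<in>UNIV. \<Sum>k\<in>UNIV. \<Sum>l\<in>UNIV. levi i j k l * M$i$a * M$j$b * M$k$c * M$l$d)"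
    by (subst det_levi_expansion) (simp add: tuple4_def transpose_def)
  ultimately show ?thesis
    by simp
qed

section \<open>Hodge duality on 2-tensors\<close>

definition levi_dual :: "real \<Rightarrow> real^4^4 \<Rightarrow> real^4^4" where
  "levi_dual s K = (\<chi> a b. s / 2 * (\<Sum>c\<in>UNIV. \<Sum>d\<in>UNIV. levi a b c d * K$c$d))"

lemma levi_dual_congruence:
  "transpose P ** levi_dual s (P ** N ** transpose P) ** P = levi_dual (s * det P) N"
proof -
  let ?t = "\<lambda>a b i j c d m n. levi i j c d * P$i$a * P$j$b * P$c$m * P$d$n * N$m$n"
  have summand: "P$i$a * levi_dual s (P ** N ** transpose P) $ i $ j * P$j$b
      = s / 2 * (\<Sum>c\<in>UNIV. \<Sum>d\<in>UNIV. \<Sum>m\<in>UNIV. \<Sum>n\<in>UNIV. ?t a b i j c d m n)" for a b i j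
    by (simp add: levi_dual_def congruence_transpose_component sum_distrib_left sum_distrib_right ac_simps)
  have "(transpose P ** levi_dual s (P ** N ** transpose P) ** P) $ a $ b
      = s / 2 * (\<Sum>i\<in>UNIV. \<Sum>j\<in>UNIV. \<Sum>c\<in>UNIV. \<Sum>d\<in>UNIV. \<Sum>m\<in>UNIV. \<Sum>n\<in>UNIV. ?t a b i j c d m n)" for a b
    by (simp only: congruence_component summand sum_distrib_left)
  also have "\<dots> a b = s / 2 * (\<Sum>m\<in>UNIV. \<Sum>n\<in>UNIV. \<Sum>i\<in>UNIV. \<Sum>j\<in>UNIV. \<Sum>c\<in>UNIV. \<Sum>d\<in>UNIV. ?t a b i j c d m n)" for a b
    by (rule arg_cong[where f = "\<lambda>x. s / 2 * x"], rule sum_swap_pair_outward)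
  also have "\<dots> a b = s / 2 * (\<Sum>m\<in>UNIV. \<Sum>n\<in>UNIV. (det P * levi a b m n) * N$m$n)" for a b
    unfolding levi_congruence[symmetric] by (simp add: sum_distrib_right)
  also have "\<dots> a b = levi_dual (s * det P) N $ a $ b" for a b
    by (simp add: levi_dual_def sum_distrib_left ac_simps)
  finally show ?thesis by (simp add: vec_eq_iff)
qed

(* With s = sigma sqrt|det g| and Gi = g^-1 this is the Hodge star of the 2-form F. *)
definition hodge_mat :: "real \<Rightarrow> real^4^4 \<Rightarrow> real^4^4 \<Rightarrow> real^4^4" where
  "hodge_mat s Gi F = levi_dual s (Gi ** F ** transpose Gi)"

(* F_cd H^cd, indices raised with Gi *)
definition form_inner :: "real^'n^'n \<Rightarrow> real^'n^'n \<Rightarrow> real^'n^'n \<Rightarrow> real" where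
  "form_inner Gi F H = trace (transpose F ** (Gi ** H ** transpose Gi))"

lemma hodge2_component:
  "hodge2 \<sigma> G W a b $ k = hodge_mat (\<sigma> * sqrt \<bar>det G\<bar>) (matrix_inv G) (\<chi> c d. W c d $ k) $ a $ b"
  unfolding hodge2_def hodge_mat_def levi_dual_def
  by (simp add: congruence_transpose_component sum_component sum_distrib_left ac_simps)

lemma minkowski_component: "minkowski $ i $ j = (if i = j then (if i = 0 then -1 else 1) else 0)"
  by (simp add: minkowski_def)

lemma transpose_minkowski: "transpose minkowski = minkowski"
  by (simp add: vec_eq_iff transpose_def minkowski_component)

lemma minkowski_mult_minkowski: "minkowski ** minkowski = mat 1"
  by (simp add: vec_eq_iff matrix_mult_component minkowski_component all_4_from_0 sum_UNIV_4 mat_def)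

lemma det_minkowski: "det minkowski = -1"
  by (subst det_diagonal) (simp_all add: minkowski_component prod_UNIV_4)

lemma minkowski_congruence_component:
  "(minkowski ** F ** minkowski) $ c $ d = (if c = 0 then -1 else 1) * (if d = 0 then -1 else 1) * F$c$d"
  by (simp add: matrix_mult_component minkowski_component if_distrib[of "\<lambda>x. x * _"] if_distrib[of "\<lambda>x. _ * x"] cong: if_cong)

definition minkowski_dual :: "real \<Rightarrow> real^4^4 \<Rightarrow> real^4^4" where
  "minkowski_dual t F = (\<chi> a b. t * (
     if a = 0 \<and> b = 1 then F$2$3 else if a = 1 \<and> b = 0 then - F$2$3 else
     if a = 0 \<and> b = 2 then - F$1$3 else if a = 2 \<and> b = 0 then F$1$3 else
     if a = 0 \<and> b = 3 then F$1$2 else if a = 3 \<and> b = 0 then - F$1$2 else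
     if a = 1 \<and> b = 2 then - F$0$3 else if a = 2 \<and> b = 1 then F$0$3 else
     if a = 1 \<and> b = 3 then F$0$2 else if a = 3 \<and> b = 1 then - F$0$2 else
     if a = 2 \<and> b = 3 then - F$0$1 else if a = 3 \<and> b = 2 then F$0$1 else 0))"

lemma hodge_mat_minkowski:
  assumes "transpose F = - F"
  shows "hodge_mat t minkowski F = minkowski_dual t F"
proof -
  have diag: "F$i$i = 0" for i
    using antisymmetric_component[OF assms, of i i] by simp
  have lower: "F$1$0 = - F$0$1" "F$2$0 = - F$0$2" "F$3$0 = - F$0$3"
      "F$2$1 = - F$1$2" "F$3$1 = - F$1$3" "F$3$2 = - F$2$3"
    by (rule antisymmetric_component[OF assms])+
  have "\<forall>a b. hodge_mat t minkowski F $ a $ b = minkowski_dual t F $ a $ b"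
    unfolding all_4_from_0
    by (simp_all only: hodge_mat_def levi_dual_def minkowski_dual_def transpose_minkowski vec_lambda_beta
        minkowski_congruence_component sum_UNIV_4)
      (simp_all add: levi_def ord_sign_simps diag lower)
  then show ?thesis by (simp add: vec_eq_iff)
qed

lemma minkowski_dual_product:
  assumes "transpose F = - F" "transpose H = - H" "t = 1 \<or> t = -1"
  shows "minkowski_dual t F ** minkowski ** transpose (minkowski_dual t H)
    = H ** minkowski ** transpose F - (1/2 * form_inner minkowski F H) *\<^sub>R minkowski"
proof -
  have diag: "F$i$i = 0" "H$i$i = 0" for i
    using antisymmetric_component[OF assms(1), of i i] antisymmetric_component[OF assms(2), of i i] by simp_all
  have lower: "F$1$0 = - F$0$1" "F$2$0 = - F$0$2" "F$3$0 = - F$0$3"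
      "F$2$1 = - F$1$2" "F$3$1 = - F$1$3" "F$3$2 = - F$2$3"
      "H$1$0 = - H$0$1" "H$2$0 = - H$0$2" "H$3$0 = - H$0$3"
      "H$2$1 = - H$1$2" "H$3$1 = - H$1$3" "H$3$2 = - H$2$3"
    by (rule antisymmetric_component[OF assms(1)] antisymmetric_component[OF assms(2)])+
  have inner: "form_inner minkowski F H = - 2 * F$0$1 * H$0$1 - 2 * F$0$2 * H$0$2 - 2 * F$0$3 * H$0$3
      + 2 * F$1$2 * H$1$2 + 2 * F$1$3 * H$1$3 + 2 * F$2$3 * H$2$3"
    unfolding form_inner_def trace_def transpose_minkowski
    by (simp only: matrix_mult_component[where A = "transpose F"] minkowski_congruence_component sum_UNIV_4)
      (simp add: transpose_def diag lower algebra_simps)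
  have "\<forall>a b. (minkowski_dual t F ** minkowski ** transpose (minkowski_dual t H)) $ a $ b
      = (H ** minkowski ** transpose F - (1/2 * form_inner minkowski F H) *\<^sub>R minkowski) $ a $ b"
    unfolding all_4_from_0 inner
    using assms(3)
    apply (elim disjE)
     apply (simp_all only: matrix_matrix_mult_def transpose_def vec_lambda_beta sum_UNIV_4 minkowski_dual_def
        minkowski_component vector_minus_component vector_scaleR_component)
     apply (simp_all add: diag lower algebra_simps)
    done
  then show ?thesis by (simp add: vec_eq_iff)
qed

lemma lorentz_frame_matrix_inv:
  fixes G P :: "real^4^4"
  assumes "invertible P" "transpose P ** G ** P = minkowski"
  shows "matrix_inv G = P ** minkowski ** transpose P"
proof (rule matrix_inv_eqI)
  obtain Q where PQ: "P ** Q = mat 1" and QP: "Q ** P = mat 1"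
    using assms(1) unfolding invertible_def by blast
  have tPQ: "transpose Q ** transpose P = mat 1" and tQP: "transpose P ** transpose Q = mat 1"
    using arg_cong[OF PQ, of transpose] arg_cong[OF QP, of transpose] by (simp_all add: matrix_transpose_mul)
  have G: "G = transpose Q ** minkowski ** Q"
    using arg_cong[OF assms(2), of "\<lambda>M. transpose Q ** M ** Q"]
    by (simp add: matrix_mul_assoc tPQ) (simp add: matrix_mul_assoc[symmetric] PQ)
  show "G ** (P ** minkowski ** transpose P) = mat 1"
    unfolding G by (simp add: matrix_mul_assoc matrix_mul_cancel_right[OF QP]
        matrix_mul_cancel_right[OF minkowski_mult_minkowski] tPQ)
  show "P ** minkowski ** transpose P ** G = mat 1"
    unfolding G by (simp add: matrix_mul_assoc matrix_mul_cancel_right[OF tQP]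
        matrix_mul_cancel_right[OF minkowski_mult_minkowski] matrix_mul_cancel_right[OF PQ] PQ)
qed

lemma lorentz_frame_orientation:
  fixes G P :: "real^4^4"
  assumes "transpose P ** G ** P = minkowski" "\<sigma> = 1 \<or> \<sigma> = -1"
  shows "\<sigma> * sqrt \<bar>det G\<bar> * det P = 1 \<or> \<sigma> * sqrt \<bar>det G\<bar> * det P = -1"
proof -
  have det_G: "det G * (det P)\<^sup>2 = -1"
    using arg_cong[OF assms(1), of det] by (simp add: det_mul det_minkowski power2_eq_square algebra_simps)
  then have "det G < 0"
    using zero_le_power2[of "det P"] by (smt (verit) mult_nonneg_nonneg)
  then have "(\<sigma> * sqrt \<bar>det G\<bar> * det P)\<^sup>2 = - det G * (det P)\<^sup>2"
    using assms(2) by (auto simp: power_mult_distrib)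
  also have "\<dots> = 1"
    using det_G by simp
  finally show ?thesis
    by (simp add: power2_eq_1_iff)
qed

lemma hodge_mat_frame:
  "transpose P ** hodge_mat s (P ** minkowski ** transpose P) F ** P
   = hodge_mat (s * det P) minkowski (transpose P ** F ** P)"
proof -
  have "P ** minkowski ** transpose P ** F ** transpose (P ** minkowski ** transpose P)
      = P ** (minkowski ** (transpose P ** F ** P) ** transpose minkowski) ** transpose P"
    by (simp add: matrix_transpose_mul matrix_mul_assoc transpose_minkowski)
  then show ?thesis
    unfolding hodge_mat_def by (simp add: levi_dual_congruence)
qed

lemma form_inner_frame:
  "form_inner (P ** minkowski ** transpose P) F H
   = form_inner minkowski (transpose P ** F ** P) (transpose P ** H ** P)"
proof -
  let ?M = "minkowski ** (transpose P ** H ** P) ** transpose minkowski"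
  have "form_inner (P ** minkowski ** transpose P) F H = trace ((transpose F ** P ** ?M) ** transpose P)"
    unfolding form_inner_def by (simp add: matrix_transpose_mul matrix_mul_assoc transpose_minkowski)
  also have "\<dots> = trace (transpose P ** (transpose F ** P ** ?M))"
    by (rule trace_mul_sym)
  also have "\<dots> = form_inner minkowski (transpose P ** F ** P) (transpose P ** H ** P)"
    unfolding form_inner_def by (simp add: matrix_transpose_mul matrix_mul_assoc)
  finally show ?thesis .
qed

lemma hodge_mat_product:
  fixes G P F H :: "real^4^4"
  assumes P: "invertible P" "transpose P ** G ** P = minkowski"
    and \<sigma>: "\<sigma> = 1 \<or> \<sigma> = -1" and antisym: "transpose F = - F" "transpose H = - H"
  defines "s \<equiv> \<sigma> * sqrt \<bar>det G\<bar>" and "Gi \<equiv> matrix_inv G"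
  shows "hodge_mat s Gi F ** Gi ** transpose (hodge_mat s Gi H)
    = H ** Gi ** transpose F - (1/2 * form_inner Gi F H) *\<^sub>R G"
proof -
  have Gi: "Gi = P ** minkowski ** transpose P"
    unfolding Gi_def by (rule lorentz_frame_matrix_inv[OF P])
  have t: "s * det P = 1 \<or> s * det P = -1"
    unfolding s_def by (rule lorentz_frame_orientation[OF P(2) \<sigma>])
  define F' H' where "F' = transpose P ** F ** P" and "H' = transpose P ** H ** P"
  have antisym': "transpose F' = - F'" "transpose H' = - H'"
    unfolding F'_def H'_def by (simp_all add: antisymmetric_congruence antisym)
  have "transpose P ** (hodge_mat s Gi F ** Gi ** transpose (hodge_mat s Gi H)) ** P
      = (transpose P ** hodge_mat s Gi F ** P) ** minkowski ** transpose (transpose P ** hodge_mat s Gi H ** P)"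
    unfolding Gi by (simp add: matrix_transpose_mul matrix_mul_assoc)
  also have "\<dots> = minkowski_dual (s * det P) F' ** minkowski ** transpose (minkowski_dual (s * det P) H')"
    unfolding Gi hodge_mat_frame F'_def[symmetric] H'_def[symmetric]
    by (simp add: hodge_mat_minkowski antisym')
  also have "\<dots> = H' ** minkowski ** transpose F' - (1/2 * form_inner minkowski F' H') *\<^sub>R minkowski"
    by (rule minkowski_dual_product[OF antisym' t])
  also have "\<dots> = transpose P ** (H ** Gi ** transpose F - (1/2 * form_inner Gi F H) *\<^sub>R G) ** P"
    unfolding Gi form_inner_frame F'_def H'_def
    by (simp add: matrix_diff_ldistrib matrix_diff_rdistrib matrix_scalar_ac scalar_matrix_assoc[symmetric]
        matrix_transpose_mul matrix_mul_assoc P(2))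
  finally show ?thesis
    by (rule congruence_cancel[OF P(1)])
qed

section \<open>The symplectic form and the taming map\<close>

definition fst_half :: "'a^('n + 'n) \<Rightarrow> 'a^'n" where
  "fst_half v = (\<chi> i. v $ Inl i)"

definition snd_half :: "'a^('n + 'n) \<Rightarrow> 'a^'n" where
  "snd_half v = (\<chi> i. v $ Inr i)"

lemma sum_UNIV_Plus:
  "sum g (UNIV::('a::finite + 'b::finite) set) = (\<Sum>x\<in>UNIV. g (Inl x)) + (\<Sum>x\<in>UNIV. g (Inr x))"
  using sum.Plus[of "UNIV::'a set" "UNIV::'b set" g] by (simp add: comp_def)

lemma omega_halves: "omega u v = snd_half u \<bullet> fst_half v - fst_half u \<bullet> snd_half v"
proof -
  have "(omega_mat *v v) $ Inl p = - v $ Inr p" "(omega_mat *v v) $ Inr p = v $ Inl p" for p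
    by (simp_all add: matrix_vector_mult_def omega_mat_def sum_UNIV_Plus if_distrib[of "\<lambda>x. x * _"] cong: if_cong)
  then show ?thesis
    unfolding omega_def inner_vec_def fst_half_def snd_half_def
    by (simp add: sum_UNIV_Plus sum_negf)
qed

lemma gamma_mat_fst_half:
  "fst_half (gamma_mat R I *v v) = - (matrix_inv I ** R) *v fst_half v + matrix_inv I *v snd_half v"
  by (simp add: vec_eq_iff fst_half_def snd_half_def gamma_mat_def Let_def matrix_vector_mult_def sum_UNIV_Plus)

lemma gamma_mat_snd_half:
  "snd_half (gamma_mat R I *v v) = (- I - R ** matrix_inv I ** R) *v fst_half v + (R ** matrix_inv I) *v snd_half v"
  by (simp add: vec_eq_iff fst_half_def snd_half_def gamma_mat_def Let_def matrix_vector_mult_def sum_UNIV_Plus)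

lemma omega_gamma_mat:
  fixes R I :: "real^'n^'n"
  assumes R: "transpose R = R" and I: "transpose I = I" "I ** matrix_inv I = mat 1"
  defines "Y \<equiv> gamma_mat R I"
  shows "omega u (Y *v v)
    = fst_half u \<bullet> (I *v fst_half v) + fst_half (Y *v u) \<bullet> (I *v fst_half (Y *v v))"
proof -
  have snd_u: "snd_half u = R *v fst_half u + I *v fst_half (Y *v u)"
    unfolding Y_def gamma_mat_fst_half
    by (simp add: matrix_vector_right_distrib matrix_vector_mult_diff_distrib matrix_vector_mul_assoc
        matrix_neg_rmult matrix_vector_mult_neg_left matrix_mul_assoc I(2))
  have snd_Yv: "snd_half (Y *v v) = R *v fst_half (Y *v v) - I *v fst_half v"
    unfolding Y_def gamma_mat_fst_half gamma_mat_snd_half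
    by (simp add: algebra_simps matrix_vector_mul_assoc matrix_mul_assoc matrix_vector_mult_neg_left)
  show ?thesis
    unfolding omega_halves snd_u snd_Yv
    by (simp add: inner_add_left inner_diff_right symmetric_matrix_inner[OF R] symmetric_matrix_inner[OF I(1)])
qed

section \<open>The energy-momentum identity\<close>

lemma omega_sum_scaleR_right:
  "omega u (A *v (\<Sum>d\<in>S. c d *\<^sub>R v d)) = (\<Sum>d\<in>S. c d * omega u (A *v v d))"
  unfolding omega_def
  by (simp add: linear_sum[OF matrix_vector_mul_linear] matrix_vector_mult_scaleR inner_sum_right)

lemma form_inner_component:
  "form_inner Gi F H
   = (\<Sum>c\<in>UNIV. \<Sum>d\<in>UNIV. F$c$d * (\<Sum>e\<in>UNIV. \<Sum>f\<in>UNIV. Gi$c$e * Gi$d$f * H$e$f))"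
proof -
  have "form_inner Gi F H = (\<Sum>d\<in>UNIV. \<Sum>c\<in>UNIV. \<Sum>f\<in>UNIV. \<Sum>e\<in>UNIV. F$c$d * (Gi$c$e * Gi$d$f * H$e$f))"
    unfolding form_inner_def trace_def matrix_mult_component congruence_transpose_component
    by (simp add: transpose_def sum_distrib_left ac_simps)
  also have "\<dots> = (\<Sum>c\<in>UNIV. \<Sum>d\<in>UNIV. \<Sum>e\<in>UNIV. \<Sum>f\<in>UNIV. F$c$d * (Gi$c$e * Gi$d$f * H$e$f))"
    by (subst sum.swap) (rule sum.cong[OF refl], rule sum.cong[OF refl], rule sum.swap)
  finally show ?thesis
    by (simp add: sum_distrib_left)
qed

lemma weighted_contraction:
  "(\<Sum>c\<in>UNIV. \<Sum>d\<in>UNIV. Gi$c$d * (\<Sum>L\<in>UNIV. \<Sum>S\<in>UNIV. Q$L$S * (X L $a$c * X S $b$d)))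
   = (\<Sum>L\<in>UNIV. \<Sum>S\<in>UNIV. Q$L$S * (X L ** Gi ** transpose (X S :: real^'n^'m))$a$b)"
proof -
  have "(\<Sum>c\<in>UNIV. \<Sum>d\<in>UNIV. Gi$c$d * (\<Sum>L\<in>UNIV. \<Sum>S\<in>UNIV. Q$L$S * (X L $a$c * X S $b$d)))
      = (\<Sum>c\<in>UNIV. \<Sum>d\<in>UNIV. \<Sum>L\<in>UNIV. \<Sum>S\<in>UNIV. Gi$c$d * (Q$L$S * (X L $a$c * X S $b$d)))"
    by (simp add: sum_distrib_left)
  also have "\<dots> = (\<Sum>L\<in>UNIV. \<Sum>S\<in>UNIV. \<Sum>c\<in>UNIV. \<Sum>d\<in>UNIV. Gi$c$d * (Q$L$S * (X L $a$c * X S $b$d)))"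
    by (rule sum_swap_pairs)
  also have "\<dots> = (\<Sum>L\<in>UNIV. \<Sum>S\<in>UNIV. Q$L$S * (X L ** Gi ** transpose (X S))$a$b)"
    by (simp add: product_transpose_component sum_distrib_left sum_distrib_right ac_simps)
  finally show ?thesis .
qed

lemma omega_gamma_mat_dual_pair:
  fixes R I :: "real^'n^'n"
  assumes R: "transpose R = R" and I: "transpose I = I" "I ** matrix_inv I = mat 1"
    and u: "fst_half (gamma_mat R I *v u) = - u'" and v: "fst_half (gamma_mat R I *v v) = - v'"
  shows "omega u (gamma_mat R I *v v)
    = (\<Sum>L\<in>UNIV. \<Sum>S\<in>UNIV. I$L$S * (u $ Inl L * v $ Inl S + u'$L * v'$S))"
  unfolding omega_gamma_mat[OF R I] u v
  by (simp add: inner_vec_def matrix_vector_mult_def fst_half_def sum_distrib_left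
      sum.distrib[symmetric] algebra_simps)

lemma sum_dual_contractions:
  fixes G :: "real^4^4" and Q :: "real^'n^'n" and F :: "'n \<Rightarrow> real^4^4"
  assumes G: "\<exists>P. invertible P \<and> transpose P ** G ** P = minkowski" and \<sigma>: "\<sigma> = 1 \<or> \<sigma> = -1"
    and Q: "transpose Q = Q" and F: "\<And>L. transpose (F L) = - F L"
  defines "Gi \<equiv> matrix_inv G" and "D \<equiv> \<lambda>L. hodge_mat (\<sigma> * sqrt \<bar>det G\<bar>) (matrix_inv G) (F L)"
  shows "(\<Sum>L\<in>UNIV. \<Sum>S\<in>UNIV. Q$L$S * (F L ** Gi ** transpose (F S))$a$b)
      + (\<Sum>L\<in>UNIV. \<Sum>S\<in>UNIV. Q$L$S * (D L ** Gi ** transpose (D S))$a$b)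
    = 2 * (\<Sum>L\<in>UNIV. \<Sum>S\<in>UNIV. Q$L$S * (F L ** Gi ** transpose (F S))$a$b)
      - 1/2 * G$a$b * (\<Sum>L\<in>UNIV. \<Sum>S\<in>UNIV. Q$L$S * form_inner Gi (F L) (F S))"
proof -
  obtain P where P: "invertible P" "transpose P ** G ** P = minkowski"
    using G by blast
  have D_product: "D L ** Gi ** transpose (D S)
      = F S ** Gi ** transpose (F L) - (1/2 * form_inner Gi (F L) (F S)) *\<^sub>R G" for L S
    unfolding D_def Gi_def by (rule hodge_mat_product[OF P \<sigma> F F])
  have Q_sym: "Q$S$L = Q$L$S" for L S
    using arg_cong[OF Q, of "\<lambda>M. M $ L $ S"] by (simp add: transpose_def)
  have "(\<Sum>L\<in>UNIV. \<Sum>S\<in>UNIV. Q$L$S * (D L ** Gi ** transpose (D S))$a$b)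
      = (\<Sum>L\<in>UNIV. \<Sum>S\<in>UNIV. Q$L$S * (F S ** Gi ** transpose (F L))$a$b)
        - 1/2 * G$a$b * (\<Sum>L\<in>UNIV. \<Sum>S\<in>UNIV. Q$L$S * form_inner Gi (F L) (F S))"
    unfolding D_product by (simp add: sum_subtractf sum_distrib_left algebra_simps)
  also have "(\<Sum>L\<in>UNIV. \<Sum>S\<in>UNIV. Q$L$S * (F S ** Gi ** transpose (F L))$a$b)
      = (\<Sum>L\<in>UNIV. \<Sum>S\<in>UNIV. Q$L$S * (F L ** Gi ** transpose (F S))$a$b)"
    by (subst sum.swap) (simp add: Q_sym)
  finally show ?thesis
    by simp
qed

lemma energy_momentum_at_point:
  fixes G :: "real^4^4" and R I :: "real^'n^'n" and W :: "4 \<Rightarrow> 4 \<Rightarrow> real^('n + 'n)"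
  assumes G: "\<exists>P. invertible P \<and> transpose P ** G ** P = minkowski" and \<sigma>: "\<sigma> = 1 \<or> \<sigma> = -1"
    and R: "sym_mat R" and I: "sym_mat I" "pos_def_mat I" and Y: "Y = gamma_mat R I"
    and W: "\<And>c d. W c d = - W d c"
    and dual: "\<And>c d. hodge2 \<sigma> G W c d = - (Y *v W c d)"
  shows "2 * (\<Sum>L\<in>UNIV. \<Sum>S\<in>UNIV. I $ L $ S *
            (\<Sum>c\<in>UNIV. W a c $ Inl L * (\<Sum>d\<in>UNIV. matrix_inv G $ c $ d * W b d $ Inl S)))
     - 1/2 * G $ a $ b * (\<Sum>L\<in>UNIV. \<Sum>S\<in>UNIV. I $ L $ S *
            (\<Sum>c\<in>UNIV. \<Sum>d\<in>UNIV. W c d $ Inl L *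
               (\<Sum>e\<in>UNIV. \<Sum>f\<in>UNIV. matrix_inv G $ c $ e * matrix_inv G $ d $ f * W e f $ Inl S)))
   = (\<Sum>c\<in>UNIV. omega (W a c) (Y *v (\<Sum>d\<in>UNIV. matrix_inv G $ c $ d *\<^sub>R W b d)))"
proof -
  have R_sym: "transpose R = R" and I_sym: "transpose I = I"
    using R I(1) unfolding sym_mat_def by auto
  have I_inv: "I ** matrix_inv I = mat 1"
    using invertible_matrix_inv[OF pos_def_invertible[OF I(2)]] by blast
  define Gi where "Gi = matrix_inv G"
  define F where "F L = (\<chi> c d. W c d $ Inl L)" for L
  define D where "D L = hodge_mat (\<sigma> * sqrt \<bar>det G\<bar>) Gi (F L)" for L
  have W_component: "W c d $ Inl L = F L $ c $ d" for c d L
    by (simp add: F_def)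
  have antisym: "transpose (F L) = - F L" for L
  proof -
    have "transpose (F L) $ i $ j = (- F L) $ i $ j" for i j
      by (simp add: F_def transpose_def W[of i j])
    then show ?thesis
      by (simp add: vec_eq_iff)
  qed
  have fst_dual: "fst_half (gamma_mat R I *v W c d) = - (\<chi> L. D L $ c $ d)" for c d
    using arg_cong[OF dual[of c d], of fst_half]
    by (simp add: Y fst_half_def vec_eq_iff hodge2_component D_def F_def Gi_def)
  have "(\<Sum>c\<in>UNIV. omega (W a c) (Y *v (\<Sum>d\<in>UNIV. Gi $ c $ d *\<^sub>R W b d)))
      = (\<Sum>c\<in>UNIV. \<Sum>d\<in>UNIV. Gi$c$d * omega (W a c) (gamma_mat R I *v W b d))"
    by (simp add: Y omega_sum_scaleR_right)
  also have "\<dots> = (\<Sum>L\<in>UNIV. \<Sum>S\<in>UNIV. I$L$S * (F L ** Gi ** transpose (F S))$a$b)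
      + (\<Sum>L\<in>UNIV. \<Sum>S\<in>UNIV. I$L$S * (D L ** Gi ** transpose (D S))$a$b)"
    by (simp only: omega_gamma_mat_dual_pair[OF R_sym I_sym I_inv fst_dual fst_dual] distrib_left
        sum.distrib W_component vec_lambda_beta weighted_contraction)
  also have "\<dots> = 2 * (\<Sum>L\<in>UNIV. \<Sum>S\<in>UNIV. I$L$S * (F L ** Gi ** transpose (F S))$a$b)
      - 1/2 * G$a$b * (\<Sum>L\<in>UNIV. \<Sum>S\<in>UNIV. I$L$S * form_inner Gi (F L) (F S))"
    unfolding D_def Gi_def by (rule sum_dual_contractions[OF G \<sigma> I_sym antisym])
  finally show ?thesis
    unfolding Gi_def product_transpose_component form_inner_component by (simp add: F_def)
qed

theorem lemma2p15:
  fixes U :: "(real^4) set" and \<sigma> :: real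
    and V :: "(real^'s::finite) set"
    and J :: "real^'s \<Rightarrow> real^('n::finite + 'n)^('n + 'n)"
    and R I :: "real^'s \<Rightarrow> real^'n^'n"
    and g :: "real^4 \<Rightarrow> real^4^4"
    and \<phi> :: "real^4 \<Rightarrow> real^'s"
    and VV :: "real^4 \<Rightarrow> 4 \<Rightarrow> 4 \<Rightarrow> real^('n + 'n)"
  assumes "open U" "contractible U" "compact (closure U)" "U \<noteq> {}"
    and "\<sigma> = 1 \<or> \<sigma> = -1"
    and "open V"
    and "taming_map V J"
    and "local_em_structure TYPE('s) V R I" and "\<forall>y\<in>V. J y = gamma_mat (R y) (I y)"
    and "lorentzian_metric U g"
    and "smooth_on U \<phi>" and "\<phi> ` U \<subseteq> V"
    and "two_form_on U VV"
    and "\<forall>x\<in>U. \<forall>a b. hodge2 \<sigma> (g x) (VV x) a b = - (J (\<phi> x) *v VV x a b)"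
  shows "\<forall>x\<in>U. \<forall>a b.
     2 * (\<Sum>L\<in>UNIV. \<Sum>S\<in>UNIV. I (\<phi> x) $ L $ S *
            (\<Sum>c\<in>UNIV. VV x a c $ Inl L * (\<Sum>d\<in>UNIV. matrix_inv (g x) $ c $ d * VV x b d $ Inl S)))
     - 1/2 * g x $ a $ b * (\<Sum>L\<in>UNIV. \<Sum>S\<in>UNIV. I (\<phi> x) $ L $ S *
            (\<Sum>c\<in>UNIV. \<Sum>d\<in>UNIV. VV x c d $ Inl L *
               (\<Sum>e\<in>UNIV. \<Sum>f\<in>UNIV. matrix_inv (g x) $ c $ e * matrix_inv (g x) $ d $ f * VV x e f $ Inl S)))
   = (\<Sum>c\<in>UNIV. omega (VV x a c)
        (J (\<phi> x) *v (\<Sum>d\<in>UNIV. matrix_inv (g x) $ c $ d *\<^sub>R VV x b d)))"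
proof (intro ballI allI energy_momentum_at_point)
  (* The identity is algebraic at each point; only the pointwise hypotheses are used. *)
  fix x assume x: "x \<in> U"
  then have y: "\<phi> x \<in> V"
    using assms(12) by blast
  show "\<exists>P. invertible P \<and> transpose P ** g x ** P = minkowski"
    using assms(10) x unfolding lorentzian_metric_def by blast
  show "\<sigma> = 1 \<or> \<sigma> = -1"
    by (rule assms(5))
  show "J (\<phi> x) = gamma_mat (R (\<phi> x)) (I (\<phi> x))"
    using assms(9) y by blast
  show "sym_mat (R (\<phi> x))" "sym_mat (I (\<phi> x))" "pos_def_mat (I (\<phi> x))"
    using assms(8) y unfolding local_em_structure_def by auto
  show "VV x c d = - VV x d c" for c d
    using assms(13) x unfolding two_form_on_def by blast
  show "hodge2 \<sigma> (g x) (VV x) c d = - (J (\<phi> x) *v VV x c d)" for c d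
    using assms(14) x by blast
qed

end
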